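(* Let $(X,A)$, $(Y,B)$, $(U,D)$ be worlds of the canonical model for $\mathbb{PCL}$. If $S_X(Y,B)\in\mathcal{N}(X,A)$ and $(U,D)\in S_X(Y,B)$, then $S_X(U,D)\subseteq S_X(Y,B)$.
   Context: Formulas $\mathcal{L}::=p\mid\bot\mid A\wedge B\mid A\lor B\mid A\to B\mid A>B$; maximal consistent sets relative to the axiom system of $\mathbb{PCL}$ (classical propositional logic, rules (RCEA) from $A\leftrightarrow B$ infer $(A>C)\leftrightarrow(B>C)$, (RCK) from $A\to B$ infer $(C>A)\to(C>B)$, axioms (ID) $A>A$, (R-And) $(A>B)\wedge(A>C)\to(A>(B\wedge C))$, (CM) $(A>B)\wedge(A>C)\to((A\wedge B)>C)$, (OR) $(A>C)\wedge(B>C)\to((A\lor B)>C)$). For maximal consistent $X$: $X^B=\{C\mid B>C\in X\}$, $A\le_X B$ iff $(A\lor B)>A\in X$. Canonical worlds: $\mathcal{W}=\{(X,A)\mid X$ maximal consistent, $A\in X\}$. For $(X,A),(Y,B)\in\mathcal{W}$: $S_X(Y,B)=\{(Z,C)\in\mathcal{W}\mid X^C\subseteq Z,\ C\le_X B,\ B\notin Z\}\cup\{(Y,B)\}$, and $\mathcal{N}(X,A)=\{S_X(Y,B)\mid(Y,B)\in\mathcal{W},\ X^B\subseteq Y\}$. *)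

theory Defs
  imports Main
begin

datatype 'p form =
    Atom 'p
  | Bot
  | Conj "'p form" "'p form"
  | Disj "'p form" "'p form"
  | Imp "'p form" "'p form"
  | Cond "'p form" "'p form"

definition Iff :: "'p form \<Rightarrow> 'p form \<Rightarrow> 'p form" where
  "Iff A B = Conj (Imp A B) (Imp B A)"

definition Top :: "'p form" where
  "Top = Imp Bot Bot"

text \<open>Classical propositional evaluation, treating atoms and conditionals
  as propositional letters.\<close>
fun peval :: "('p form \<Rightarrow> bool) \<Rightarrow> 'p form \<Rightarrow> bool" where
  "peval v (Atom p) = v (Atom p)"
| "peval v Bot = False"
| "peval v (Conj A B) = (peval v A \<and> peval v B)"
| "peval v (Disj A B) = (peval v A \<or> peval v B)"
| "peval v (Imp A B) = (peval v A \<longrightarrow> peval v B)"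
| "peval v (Cond A B) = v (Cond A B)"

definition taut :: "'p form \<Rightarrow> bool" where
  "taut A = (\<forall>v. peval v A)"

inductive pcl :: "'p form \<Rightarrow> bool" where
  Taut: "taut A \<Longrightarrow> pcl A"
| MP: "pcl (Imp A B) \<Longrightarrow> pcl A \<Longrightarrow> pcl B"
| RCEA: "pcl (Iff A B) \<Longrightarrow> pcl (Iff (Cond A C) (Cond B C))"
| RCK: "pcl (Imp A B) \<Longrightarrow> pcl (Imp (Cond C A) (Cond C B))"
| ID: "pcl (Cond A A)"
| RAnd: "pcl (Imp (Conj (Cond A B) (Cond A C)) (Cond A (Conj B C)))"
| CM: "pcl (Imp (Conj (Cond A B) (Cond A C)) (Cond (Conj A B) C))"
| OR: "pcl (Imp (Conj (Cond A C) (Cond B C)) (Cond (Disj A B) C))"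

definition conjs :: "'p form list \<Rightarrow> 'p form" where
  "conjs L = foldr Conj L Top"

definition consistent :: "'p form set \<Rightarrow> bool" where
  "consistent X = (\<not> (\<exists>L. set L \<subseteq> X \<and> pcl (Imp (conjs L) Bot)))"

definition maxcons :: "'p form set \<Rightarrow> bool" where
  "maxcons X = (consistent X \<and> (\<forall>A. A \<notin> X \<longrightarrow> \<not> consistent (insert A X)))"

definition condset :: "'p form set \<Rightarrow> 'p form \<Rightarrow> 'p form set" where
  "condset X B = {C. Cond B C \<in> X}"

definition leX :: "'p form set \<Rightarrow> 'p form \<Rightarrow> 'p form \<Rightarrow> bool" where
  "leX X A B = (Cond (Disj A B) A \<in> X)"

definition worlds :: "('p form set \<times> 'p form) set" where
  "worlds = {(X, A). maxcons X \<and> A \<in> X}"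

definition SX :: "'p form set \<Rightarrow> ('p form set \<times> 'p form) \<Rightarrow> ('p form set \<times> 'p form) set" where
  "SX X w = (case w of (Y, B) \<Rightarrow>
     {(Z, C) \<in> worlds. condset X C \<subseteq> Z \<and> leX X C B \<and> B \<notin> Z} \<union> {(Y, B)})"

definition NX :: "('p form set \<times> 'p form) \<Rightarrow> ('p form set \<times> 'p form) set set" where
  "NX w = (case w of (X, A) \<Rightarrow>
     {SX X (Y, B) | Y B. (Y, B) \<in> worlds \<and> condset X B \<subseteq> Y})"

end

theory Submission
  imports Defs
begin

text \<open>Let \<open>(Z, C) \<noteq> (U, D)\<close> be a world of \<open>S\<^sub>X(U, D)\<close>; if \<open>(U, D) \<noteq> (Y, B)\<close>, then
  \<open>C \<le>\<^sub>X D \<le>\<^sub>X B\<close>. In PCL the relation \<open>\<le>\<^sub>X\<close> is transitive, and such a chain moreover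
  puts \<open>C > (B \<rightarrow> D)\<close> into \<open>X\<close>. As \<open>X\<^sup>C \<subseteq> Z\<close> and \<open>D \<notin> Z\<close>, this gives \<open>B \<notin> Z\<close>, so
  \<open>(Z, C) \<in> S\<^sub>X(Y, B)\<close>.\<close>

lemma peval_conjs: "peval v (conjs L) = (\<forall>x\<in>set L. peval v x)"
  by (induct L) (auto simp: conjs_def Top_def)

lemma maxcons_derivable_mem:
  assumes "maxcons X" "set Ps \<subseteq> X" "pcl (Imp (conjs Ps) Q)"
  shows "Q \<in> X"
proof (rule ccontr)
  assume "Q \<notin> X"
  with assms(1) have "\<not> consistent (insert Q X)" by (auto simp: maxcons_def)
  then obtain L where L: "set L \<subseteq> insert Q X" "pcl (Imp (conjs L) Bot)"
    by (auto simp: consistent_def)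
  define L' where "L' = Ps @ filter (\<lambda>x. x \<noteq> Q) L"
  have "set L' \<subseteq> X" using L assms(2) by (auto simp: L'_def)
  moreover have "taut (Imp (Imp (conjs Ps) Q) (Imp (Imp (conjs L) Bot) (Imp (conjs L') Bot)))"
    unfolding taut_def by (auto simp: peval_conjs L'_def)
  then have "pcl (Imp (conjs L') Bot)"
    using assms(3) L(2) by (meson pcl.MP pcl.Taut)
  ultimately show False using assms(1) by (auto simp: maxcons_def consistent_def)
qed

lemma maxcons_taut_consequence_mem:
  "maxcons X \<Longrightarrow> set Ps \<subseteq> X \<Longrightarrow> taut (Imp (conjs Ps) Q) \<Longrightarrow> Q \<in> X"
  using maxcons_derivable_mem pcl.Taut by blast

lemma maxcons_pcl_mem:
  assumes "maxcons X" "pcl P"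
  shows "P \<in> X"
proof -
  have "taut (Imp P (Imp (conjs []) P))" by (simp add: taut_def)
  then have "pcl (Imp (conjs []) P)" using pcl.MP pcl.Taut assms(2) by blast
  then show ?thesis using maxcons_derivable_mem[OF assms(1), of "[]"] by simp
qed

lemma maxcons_imp_mem: "maxcons X \<Longrightarrow> Imp P Q \<in> X \<Longrightarrow> P \<in> X \<Longrightarrow> Q \<in> X"
  by (rule maxcons_taut_consequence_mem[where Ps="[Imp P Q, P]"])
     (auto simp: taut_def peval_conjs)

lemma maxcons_conj_mem: "maxcons X \<Longrightarrow> P \<in> X \<Longrightarrow> Q \<in> X \<Longrightarrow> Conj P Q \<in> X"
  by (rule maxcons_taut_consequence_mem[where Ps="[P, Q]"]) (auto simp: taut_def peval_conjs)

lemma maxcons_cond_ID: "maxcons X \<Longrightarrow> Cond A A \<in> X"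
  by (simp add: maxcons_pcl_mem pcl.ID)

lemma maxcons_cond_LLE:
  assumes "maxcons X" "taut (Iff A A')" "Cond A B \<in> X"
  shows "Cond A' B \<in> X"
proof -
  have "Iff (Cond A B) (Cond A' B) \<in> X"
    using maxcons_pcl_mem[OF assms(1)] pcl.RCEA pcl.Taut assms(2) by blast
  with assms show ?thesis
    by (intro maxcons_taut_consequence_mem[where Ps="[Iff (Cond A B) (Cond A' B), Cond A B]"])
       (auto simp: taut_def peval_conjs Iff_def)
qed

lemma maxcons_cond_RW:
  assumes "maxcons X" "taut (Imp B B')" "Cond A B \<in> X"
  shows "Cond A B' \<in> X"
  using assms maxcons_imp_mem maxcons_pcl_mem pcl.RCK pcl.Taut by metis

lemma maxcons_cond_AND:
  "maxcons X \<Longrightarrow> Cond A B \<in> X \<Longrightarrow> Cond A C \<in> X \<Longrightarrow> Cond A (Conj B C) \<in> X"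
  using maxcons_imp_mem maxcons_pcl_mem maxcons_conj_mem pcl.RAnd by metis

lemma maxcons_cond_CM:
  "maxcons X \<Longrightarrow> Cond A B \<in> X \<Longrightarrow> Cond A C \<in> X \<Longrightarrow> Cond (Conj A B) C \<in> X"
  using maxcons_imp_mem maxcons_pcl_mem maxcons_conj_mem pcl.CM by metis

lemma maxcons_cond_OR:
  "maxcons X \<Longrightarrow> Cond A C \<in> X \<Longrightarrow> Cond B C \<in> X \<Longrightarrow> Cond (Disj A B) C \<in> X"
  using maxcons_imp_mem maxcons_pcl_mem maxcons_conj_mem pcl.OR by metis

text \<open>Split \<open>E\<close> into \<open>F\<close> and \<open>E \<and> \<not>F\<close>; the second part yields \<open>G\<close> by \<open>ID\<close> alone.\<close>

lemma maxcons_cond_antecedent_extend: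
  assumes X: "maxcons X" and FG: "Cond F G \<in> X"
    and FE: "taut (Imp F E)" and rest: "taut (Imp (Conj E (Imp F Bot)) G)"
  shows "Cond E G \<in> X"
proof -
  have "Cond (Conj E (Imp F Bot)) G \<in> X"
    using maxcons_cond_RW[OF X rest maxcons_cond_ID[OF X]] .
  then have "Cond (Disj F (Conj E (Imp F Bot))) G \<in> X"
    using maxcons_cond_OR[OF X FG] by blast
  moreover have "taut (Iff (Disj F (Conj E (Imp F Bot))) E)"
    using FE by (auto simp: taut_def Iff_def)
  ultimately show ?thesis using maxcons_cond_LLE[OF X] by blast
qed

lemma maxcons_cond_cut:
  assumes X: "maxcons X" and EF: "Cond E F \<in> X" and FG: "Cond F G \<in> X"
    and FE: "taut (Imp F E)"
  shows "Cond E G \<in> X"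
proof -
  have "Cond F (Imp F G) \<in> X"
    by (rule maxcons_cond_RW[OF X _ FG]) (auto simp: taut_def)
  then have "Cond E (Imp F G) \<in> X"
    by (rule maxcons_cond_antecedent_extend[OF X _ FE]) (auto simp: taut_def)
  then have "Cond E (Conj F (Imp F G)) \<in> X"
    by (rule maxcons_cond_AND[OF X EF])
  then show ?thesis
    by (rule maxcons_cond_RW[OF X, rotated]) (auto simp: taut_def)
qed

lemma leX_chain_cond:
  assumes X: "maxcons X" and CD: "leX X C D" and DB: "leX X D B"
  shows "Cond (Disj C (Disj D B)) C \<in> X"
proof -
  have "Cond (Disj D B) (Disj C D) \<in> X"
    using DB unfolding leX_def by (rule maxcons_cond_RW[OF X, rotated]) (auto simp: taut_def)
  then have "Cond (Disj C (Disj D B)) (Disj C D) \<in> X"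
    by (rule maxcons_cond_antecedent_extend[OF X]) (auto simp: taut_def)
  then show ?thesis
    using CD unfolding leX_def by (rule maxcons_cond_cut[OF X]) (auto simp: taut_def)
qed

lemma leX_trans:
  assumes X: "maxcons X" and "leX X C D" "leX X D B"
  shows "leX X C B"
proof -
  let ?E = "Disj C (Disj D B)"
  have EC: "Cond ?E C \<in> X" using leX_chain_cond assms .
  then have "Cond ?E (Disj C B) \<in> X"
    by (rule maxcons_cond_RW[OF X, rotated]) (auto simp: taut_def)
  then have "Cond (Conj ?E (Disj C B)) C \<in> X"
    by (rule maxcons_cond_CM[OF X _ EC])
  then show ?thesis
    unfolding leX_def by (rule maxcons_cond_LLE[OF X, rotated]) (auto simp: taut_def Iff_def)
qed

lemma leX_chain_cond_imp:
  assumes X: "maxcons X" and "leX X C D" and DB: "leX X D B"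
  shows "Cond C (Imp B D) \<in> X"
proof -
  let ?E = "Disj C (Disj D B)"
  have "Cond (Disj D B) (Imp B D) \<in> X"
    using DB unfolding leX_def by (rule maxcons_cond_RW[OF X, rotated]) (auto simp: taut_def)
  then have "Cond ?E (Imp B D) \<in> X"
    by (rule maxcons_cond_antecedent_extend[OF X]) (auto simp: taut_def)
  then have "Cond (Conj ?E C) (Imp B D) \<in> X"
    by (rule maxcons_cond_CM[OF X leX_chain_cond[OF assms]])
  then show ?thesis
    by (rule maxcons_cond_LLE[OF X, rotated]) (auto simp: taut_def Iff_def)
qed

lemma mem_SX_iff:
  "(Z, C) \<in> SX X (Y, B) \<longleftrightarrow>
     (Z, C) = (Y, B) \<or> ((Z, C) \<in> worlds \<and> condset X C \<subseteq> Z \<and> leX X C B \<and> B \<notin> Z)"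
  by (auto simp: SX_def)

theorem mainTheorem7:
  fixes X Y U :: "'p form set" and A B D :: "'p form"
  assumes "(X, A) \<in> worlds" and "(Y, B) \<in> worlds" and "(U, D) \<in> worlds"
    and "SX X (Y, B) \<in> NX (X, A)"
    and "(U, D) \<in> SX X (Y, B)"
  shows "SX X (U, D) \<subseteq> SX X (Y, B)"
proof (cases "(U, D) = (Y, B)")
  case False
  have X: "maxcons X" using assms(1) by (simp add: worlds_def)
  from assms(5) False have DB: "leX X D B" by (auto simp: mem_SX_iff)
  show ?thesis
  proof (clarify)
    fix Z C assume ZC: "(Z, C) \<in> SX X (U, D)"
    show "(Z, C) \<in> SX X (Y, B)"
    proof (cases "(Z, C) = (U, D)")
      case False
      with ZC have Z: "(Z, C) \<in> worlds" "condset X C \<subseteq> Z" "leX X C D" "D \<notin> Z"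
        by (auto simp: mem_SX_iff)
      have "Imp B D \<in> Z"
        using leX_chain_cond_imp[OF X Z(3) DB] Z(2) by (auto simp: condset_def)
      then have "B \<notin> Z"
        using Z(1,4) maxcons_imp_mem by (auto simp: worlds_def)
      then show ?thesis using Z leX_trans[OF X Z(3) DB] by (simp add: mem_SX_iff)
    qed (use assms(5) in simp)
  qed
qed simp

end
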